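(* For every integer $n\geqslant 1$ there exist a family $\mathscr B$ of boxes in $\mathbb R^2$ and two lines $l_1,l_2$ parallel to the $x$-axis such that every box of $\mathscr B$ intersects at least one of $l_1,l_2$, $\nu(\mathscr B)=n$, and $\tau(\mathscr B)=\left[\frac{3n}{2}\right]$.
   Context: A box in $\mathbb R^2$ is a set $[a_1,b_1]\times[a_2,b_2]$ with sides parallel to the coordinate axes. For a family $\mathscr B$ of boxes, $\nu(\mathscr B)$ is the maximal number of pairwise disjoint members of $\mathscr B$, and $\tau(\mathscr B)$ is the minimal number of points in a set meeting every member of $\mathscr B$. $[x]$ denotes the integer part of $x$. *)

theory Defs
  imports Complex_Main
begin

definition is_box :: "(real \<times> real) set \<Rightarrow> bool" where
  "is_box S \<longleftrightarrow> (\<exists>a1 b1 a2 b2. a1 \<le> b1 \<and> a2 \<le> b2 \<and> S = {a1..b1} \<times> {a2..b2})"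

definition pairwise_disjoint_fam :: "(real \<times> real) set set \<Rightarrow> bool" where
  "pairwise_disjoint_fam F \<longleftrightarrow> (\<forall>S\<in>F. \<forall>T\<in>F. S \<noteq> T \<longrightarrow> S \<inter> T = {})"

definition nu :: "(real \<times> real) set set \<Rightarrow> nat" where
  "nu B = (GREATEST k. \<exists>F. F \<subseteq> B \<and> finite F \<and> card F = k \<and> pairwise_disjoint_fam F)"

definition tau :: "(real \<times> real) set set \<Rightarrow> nat" where
  "tau B = (LEAST k. \<exists>P. finite P \<and> card P = k \<and> (\<forall>S\<in>B. S \<inter> P \<noteq> {}))"

definition hline :: "real \<Rightarrow> (real \<times> real) set" where
  "hline c = {p. snd p = c}"

end

theory Submission
  imports Defs
begin

text \<open>Five boxes whose intersection graph is a pentagon have \<open>\<nu> = 2\<close> and \<open>\<tau> = 3\<close>: a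
  disjoint subfamily is an independent set of the pentagon, and since the complement of the
  pentagon is again a pentagon, no point lies in three of the boxes, so three points are needed
  to pierce all five. Such a gadget can be drawn so that each box meets the line \<open>y = 0\<close> or
  \<open>y = 10\<close>. Both \<open>\<nu>\<close> and \<open>\<tau>\<close> are additive over horizontally separated families, so
  \<open>\<lfloor>n/2\<rfloor>\<close> gadgets side by side, plus a single point when \<open>n\<close> is odd, give
  \<open>\<nu> = n\<close> and \<open>\<tau> = 3\<lfloor>n/2\<rfloor> + (n mod 2) = \<lfloor>3n/2\<rfloor>\<close>.\<close>

lemma card_le_nu:
  assumes "finite B" "F \<subseteq> B" "pairwise_disjoint_fam F"
  shows "card F \<le> nu B"
  unfolding nu_def
proof (rule Greatest_le_nat)
  show "\<exists>G. G \<subseteq> B \<and> finite G \<and> card G = card F \<and> pairwise_disjoint_fam G"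
    using assms finite_subset by blast
  show "y \<le> card B" if "\<exists>G. G \<subseteq> B \<and> finite G \<and> card G = y \<and> pairwise_disjoint_fam G" for y
    using that assms(1) card_mono by blast
qed

lemma nu_attained:
  assumes "finite B"
  obtains F where "F \<subseteq> B" "card F = nu B" "pairwise_disjoint_fam F"
proof -
  have "\<exists>F. F \<subseteq> B \<and> finite F \<and> card F = nu B \<and> pairwise_disjoint_fam F"
    unfolding nu_def
  proof (rule GreatestI_nat)
    show "\<exists>F. F \<subseteq> B \<and> finite F \<and> card F = 0 \<and> pairwise_disjoint_fam F"
      by (intro exI[of _ "{}"]) (simp add: pairwise_disjoint_fam_def)
    show "y \<le> card B" if "\<exists>G. G \<subseteq> B \<and> finite G \<and> card G = y \<and> pairwise_disjoint_fam G" for y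
      using that assms card_mono by blast
  qed
  then show thesis using that by (elim exE conjE)
qed

lemma tau_le_card:
  assumes "finite P" "\<forall>S\<in>B. S \<inter> P \<noteq> {}"
  shows "tau B \<le> card P"
  unfolding tau_def by (rule Least_le) (use assms in blast)

lemma tau_attained:
  assumes "finite B" "{} \<notin> B"
  obtains P where "finite P" "card P = tau B" "\<forall>S\<in>B. S \<inter> P \<noteq> {}"
proof -
  have "\<exists>P. finite P \<and> card P = tau B \<and> (\<forall>S\<in>B. S \<inter> P \<noteq> {})"
    unfolding tau_def
  proof (rule LeastI_ex)
    have "(SOME p. p \<in> S) \<in> S" if "S \<in> B" for S
      using that assms(2) by (metis ex_in_conv someI_ex)
    then have "\<forall>S\<in>B. S \<inter> (\<lambda>S. SOME p. p \<in> S) ` B \<noteq> {}"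
      by blast
    then show "\<exists>k P. finite P \<and> card P = k \<and> (\<forall>S\<in>B. S \<inter> P \<noteq> {})"
      using assms(1) by blast
  qed
  then show thesis using that by (elim exE conjE)
qed

lemma nu_empty: "nu {} = 0"
  using nu_attained[of "{}"] by auto

lemma tau_empty: "tau {} = 0"
  using tau_le_card[of "{}" "{}"] by simp

lemma pairwise_disjoint_fam_Un:
  assumes "pairwise_disjoint_fam F" "pairwise_disjoint_fam G" "\<And>S T. S \<in> F \<Longrightarrow> T \<in> G \<Longrightarrow> S \<inter> T = {}"
  shows "pairwise_disjoint_fam (F \<union> G)"
  unfolding pairwise_disjoint_fam_def
proof (intro ballI impI)
  fix S T assume ST: "S \<in> F \<union> G" "T \<in> F \<union> G" "S \<noteq> T"
  show "S \<inter> T = {}"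
  proof (cases "S \<in> F"; cases "T \<in> F")
    assume "S \<in> F" "T \<notin> F" then show ?thesis using ST assms(3) by blast
  next
    assume "S \<notin> F" "T \<in> F" then show ?thesis using ST assms(3)[of T S] by blast
  qed (use ST assms(1,2) in \<open>auto simp: pairwise_disjoint_fam_def\<close>)
qed

lemma nu_Un_separated:
  assumes "finite A" "finite B" "{} \<notin> A" "\<Union>A \<subseteq> R" "\<Union>B \<inter> R = {}"
  shows "nu (A \<union> B) = nu A + nu B"
proof (rule antisym)
  obtain F where F: "F \<subseteq> A \<union> B" "card F = nu (A \<union> B)" "pairwise_disjoint_fam F"
    using nu_attained assms(1,2) by (metis finite_UnI)
  have "F = (F \<inter> A) \<union> (F \<inter> B)"
    using F(1) by blast
  then have "card F \<le> card (F \<inter> A) + card (F \<inter> B)"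
    by (metis card_Un_le)
  also have "\<dots> \<le> nu A + nu B"
    using F(3) assms(1,2) by (intro add_mono card_le_nu) (auto simp: pairwise_disjoint_fam_def)
  finally show "nu (A \<union> B) \<le> nu A + nu B" using F(2) by simp
next
  obtain FA where FA: "FA \<subseteq> A" "card FA = nu A" "pairwise_disjoint_fam FA"
    using nu_attained assms(1) by blast
  obtain FB where FB: "FB \<subseteq> B" "card FB = nu B" "pairwise_disjoint_fam FB"
    using nu_attained assms(2) by blast
  have separated: "S \<inter> T = {}" if "S \<in> A" "T \<in> B" for S T
    using that assms(4,5) by blast
  have "FA \<inter> FB = {}"
  proof (rule equals0I)
    fix S assume "S \<in> FA \<inter> FB"
    then have "S \<inter> S = {}" using FA(1) FB(1) separated by blast
    then show False using \<open>S \<in> FA \<inter> FB\<close> FA(1) assms(3) by auto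
  qed
  moreover have "finite FA" "finite FB"
    using FA(1) FB(1) assms(1,2) finite_subset by blast+
  ultimately have "card (FA \<union> FB) = nu A + nu B"
    using FA(2) FB(2) by (simp add: card_Un_disjoint)
  moreover have "pairwise_disjoint_fam (FA \<union> FB)"
    using FA(1) FB(1) by (intro pairwise_disjoint_fam_Un separated FA(3) FB(3)) blast+
  ultimately show "nu A + nu B \<le> nu (A \<union> B)"
    using FA(1) FB(1) assms(1,2) card_le_nu[of "A \<union> B" "FA \<union> FB"] by auto
qed

lemma tau_Un_separated:
  assumes "finite A" "finite B" "{} \<notin> A" "{} \<notin> B" "\<Union>A \<subseteq> R" "\<Union>B \<inter> R = {}"
  shows "tau (A \<union> B) = tau A + tau B"
proof (rule antisym)
  obtain P where P: "finite P" "card P = tau A" "\<forall>S\<in>A. S \<inter> P \<noteq> {}"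
    using tau_attained[OF assms(1,3)] .
  obtain Q where Q: "finite Q" "card Q = tau B" "\<forall>S\<in>B. S \<inter> Q \<noteq> {}"
    using tau_attained[OF assms(2,4)] .
  have "\<forall>S\<in>A \<union> B. S \<inter> (P \<union> Q) \<noteq> {}"
    using P(3) Q(3) by blast
  then have "tau (A \<union> B) \<le> card (P \<union> Q)"
    using P(1) Q(1) by (intro tau_le_card) simp_all
  also have "\<dots> \<le> tau A + tau B"
    using P(2) Q(2) card_Un_le by metis
  finally show "tau (A \<union> B) \<le> tau A + tau B" .
next
  have "finite (A \<union> B)" "{} \<notin> A \<union> B"
    using assms(1-4) by simp_all
  then obtain P where P: "finite P" "card P = tau (A \<union> B)" "\<forall>S\<in>A \<union> B. S \<inter> P \<noteq> {}"
    by (rule tau_attained)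
  have "\<forall>S\<in>A. S \<inter> (P \<inter> R) \<noteq> {}"
    using P(3) assms(5) by blast
  then have "tau A \<le> card (P \<inter> R)"
    using P(1) by (intro tau_le_card) simp_all
  moreover have "\<forall>S\<in>B. S \<inter> (P - R) \<noteq> {}"
    using P(3) assms(6) by blast
  then have "tau B \<le> card (P - R)"
    using P(1) by (intro tau_le_card) simp_all
  moreover have "card P = card (P \<inter> R) + card (P - R)"
    using P(1) by (rule card_Int_Diff)
  ultimately show "tau A + tau B \<le> tau (A \<union> B)"
    using P(2) by linarith
qed

lemma nu_singleton: "nu {S} = 1"
proof (rule antisym)
  obtain F where "F \<subseteq> {S}" "card F = nu {S}"
    using nu_attained[OF finite.insertI[OF finite.emptyI]] .
  then have "card F \<le> card {S}"
    by (intro card_mono) simp_all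
  then show "nu {S} \<le> 1"
    using \<open>card F = nu {S}\<close> by simp
  have "pairwise_disjoint_fam {S}"
    by (simp add: pairwise_disjoint_fam_def)
  then show "1 \<le> nu {S}"
    using card_le_nu[of "{S}" "{S}"] by simp
qed

lemma tau_singleton:
  assumes "S \<noteq> {}"
  shows "tau {S} = 1"
proof (rule antisym)
  obtain p where "p \<in> S"
    using assms by blast
  then show "tau {S} \<le> 1"
    using tau_le_card[of "{p}" "{S}"] by simp
  obtain P where "finite P" "card P = tau {S}" "\<forall>T\<in>{S}. T \<inter> P \<noteq> {}"
    using tau_attained[of "{S}"] assms by blast
  then have "0 < card P"
    by (auto simp: card_gt_0_iff)
  then show "1 \<le> tau {S}"
    using \<open>card P = tau {S}\<close> by simp
qed

lemma card_le_mult_card_transversal: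
  assumes "finite B" "finite P" "\<forall>S\<in>B. S \<inter> P \<noteq> {}"
    and "\<And>p. p \<in> P \<Longrightarrow> card {S\<in>B. p \<in> S} \<le> r"
  shows "card B \<le> r * card P"
proof -
  have "B = (\<Union>p\<in>P. {S\<in>B. p \<in> S})"
    using assms(3) by blast
  then have "card B \<le> (\<Sum>p\<in>P. card {S\<in>B. p \<in> S})"
    using card_UN_le[OF assms(2), of "\<lambda>p. {S\<in>B. p \<in> S}"] by simp
  also have "\<dots> \<le> card P * r"
    using assms(4) sum_bounded_above[of P "\<lambda>p. card {S\<in>B. p \<in> S}" r] by simp
  finally show ?thesis
    by (simp add: mult.commute)
qed

lemma card_le_2_if_pentagon_independent:
  assumes "X \<subseteq> {a, b, c, d, e}"
    and "\<not> {a, b} \<subseteq> X" "\<not> {b, c} \<subseteq> X" "\<not> {c, d} \<subseteq> X" "\<not> {d, e} \<subseteq> X" "\<not> {e, a} \<subseteq> X"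
  shows "card X \<le> 2"
proof -
  have "\<exists>u v. X \<subseteq> {u, v}"
    using assms by blast
  then obtain u v where "X \<subseteq> {u, v}"
    by blast
  then have "card X \<le> card {u, v}"
    by (intro card_mono) simp_all
  also have "\<dots> \<le> 2"
    by (simp add: card_insert_if)
  finally show ?thesis .
qed

lemma is_box_Times: "a1 \<le> b1 \<Longrightarrow> a2 \<le> b2 \<Longrightarrow> is_box ({a1..b1} \<times> {a2..b2})"
  unfolding is_box_def by blast

lemma Times_Int_hline_eq_empty_iff:
  "({a1..b1} \<times> {a2..b2}) \<inter> hline c = {} \<longleftrightarrow> \<not> (a1 \<le> b1 \<and> a2 \<le> c \<and> c \<le> b2)"
proof
  assume empty: "({a1..b1} \<times> {a2..b2}) \<inter> hline c = {}"
  show "\<not> (a1 \<le> b1 \<and> a2 \<le> c \<and> c \<le> b2)"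
  proof
    assume "a1 \<le> b1 \<and> a2 \<le> c \<and> c \<le> b2"
    then have "(a1, c) \<in> ({a1..b1} \<times> {a2..b2}) \<inter> hline c"
      by (simp add: hline_def)
    then show False
      using empty by blast
  qed
qed (auto simp: hline_def)

text \<open>The five boxes are listed in cyclic order: consecutive ones overlap, all other pairs are
  disjoint.\<close>

definition gadget :: "real \<Rightarrow> (real \<times> real) set set" where
  "gadget x = {{x..x+5} \<times> {0..10}, {x..x+10} \<times> {10..10}, {x+10..x+20} \<times> {10..10},
               {x+20..x+30} \<times> {5..10}, {x+5..x+25} \<times> {0..7}}"

lemma card_gadget: "card (gadget x) = 5"
  unfolding gadget_def by (simp add: times_eq_iff)

lemma empty_notin_gadget: "{} \<notin> gadget x"
  unfolding gadget_def by (simp add: eq_commute[of "{}"])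

lemma gadget_boxes: "S \<in> gadget x \<Longrightarrow> is_box S"
  unfolding gadget_def by (auto intro!: is_box_Times simp del: atLeastAtMost_singleton)

lemma gadget_meets_hlines: "S \<in> gadget x \<Longrightarrow> S \<inter> hline 0 \<noteq> {} \<or> S \<inter> hline 10 \<noteq> {}"
  unfolding gadget_def by (auto simp: Times_Int_hline_eq_empty_iff simp del: atLeastAtMost_singleton)

lemma Union_gadget_subset: "\<Union>(gadget x) \<subseteq> {p. x \<le> fst p \<and> fst p \<le> x + 30}"
  unfolding gadget_def by auto

lemma card_gadget_containing: "card {S\<in>gadget x. p \<in> S} \<le> 2"
proof -
  let ?c1 = "{x..x+5} \<times> {0..10::real}" and ?c2 = "{x..x+10} \<times> {10..10::real}"
    and ?c3 = "{x+10..x+20} \<times> {10..10::real}" and ?c4 = "{x+20..x+30} \<times> {5..10::real}"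
    and ?c5 = "{x+5..x+25} \<times> {0..7::real}"
  obtain a b where p: "p = (a, b)"
    by fastforce
  show ?thesis
    by (rule card_le_2_if_pentagon_independent[of _ ?c1 ?c3 ?c5 ?c2 ?c4]) (auto simp: gadget_def p)
qed

lemma card_disjoint_subfamily_gadget:
  assumes "F \<subseteq> gadget x" "pairwise_disjoint_fam F"
  shows "card F \<le> 2"
proof -
  let ?c1 = "{x..x+5} \<times> {0..10::real}" and ?c2 = "{x..x+10} \<times> {10..10::real}"
    and ?c3 = "{x+10..x+20} \<times> {10..10::real}" and ?c4 = "{x+20..x+30} \<times> {5..10::real}"
    and ?c5 = "{x+5..x+25} \<times> {0..7::real}"
  have overlapping_distinct: "\<not> {S, T} \<subseteq> F" if "S \<inter> T \<noteq> {}" "S \<noteq> T" for S T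
    using assms(2) that unfolding pairwise_disjoint_fam_def by blast
  show ?thesis
  proof (rule card_le_2_if_pentagon_independent[of _ ?c1 ?c2 ?c3 ?c4 ?c5])
    show "F \<subseteq> {?c1, ?c2, ?c3, ?c4, ?c5}"
      using assms(1) by (simp add: gadget_def)
  qed (intro overlapping_distinct; simp add: Times_Int_Times times_eq_iff)+
qed

lemma nu_gadget: "nu (gadget x) = 2"
proof (rule antisym)
  obtain F where "F \<subseteq> gadget x" "card F = nu (gadget x)" "pairwise_disjoint_fam F"
    using nu_attained[of "gadget x"] by (auto simp: gadget_def)
  then show "nu (gadget x) \<le> 2"
    using card_disjoint_subfamily_gadget by metis
  let ?F = "{{x..x+5} \<times> {0..10}, {x+10..x+20} \<times> {10..10::real}}"
  have "card ?F = 2" "pairwise_disjoint_fam ?F"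
    by (auto simp: times_eq_iff pairwise_disjoint_fam_def)
  moreover have "?F \<subseteq> gadget x"
    by (auto simp: gadget_def)
  ultimately show "2 \<le> nu (gadget x)"
    using card_le_nu[of "gadget x" ?F] by (simp add: gadget_def)
qed

lemma tau_gadget: "tau (gadget x) = 3"
proof (rule antisym)
  let ?P = "{(x+5, 0), (x+10, 10), (x+20, 5::real)}"
  have "\<forall>S\<in>gadget x. S \<inter> ?P \<noteq> {}"
    by (auto simp: gadget_def)
  then have "tau (gadget x) \<le> card ?P"
    by (intro tau_le_card) simp_all
  then show "tau (gadget x) \<le> 3"
    by simp
  obtain P where P: "finite P" "card P = tau (gadget x)" "\<forall>S\<in>gadget x. S \<inter> P \<noteq> {}"
    using tau_attained[OF _ empty_notin_gadget] by (auto simp: gadget_def)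
  have "card (gadget x) \<le> 2 * card P"
    using P(1,3) card_gadget_containing by (intro card_le_mult_card_transversal) (auto simp: gadget_def)
  then show "3 \<le> tau (gadget x)"
    using P(2) card_gadget by simp
qed

definition gadget_row :: "nat \<Rightarrow> (real \<times> real) set set" where
  "gadget_row m = (\<Union>k<m. gadget (40 * real k))"

lemma gadget_row_Suc: "gadget_row (Suc m) = gadget_row m \<union> gadget (40 * real m)"
  unfolding gadget_row_def by (simp add: lessThan_Suc Un_commute)

lemma finite_gadget_row: "finite (gadget_row m)"
  unfolding gadget_row_def gadget_def by simp

lemma empty_notin_gadget_row: "{} \<notin> gadget_row m"
  unfolding gadget_row_def using empty_notin_gadget by blast

lemma Union_gadget_row_subset: "\<Union>(gadget_row m) \<subseteq> {p. fst p < 40 * real m}"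
proof (induction m)
  case (Suc m)
  then show ?case
    using Union_gadget_subset[of "40 * real m"] by (fastforce simp: gadget_row_Suc)
qed (simp add: gadget_row_def)

lemma nu_tau_gadget_row: "nu (gadget_row m) = 2 * m \<and> tau (gadget_row m) = 3 * m"
proof (induction m)
  case 0
  then show ?case
    by (simp add: gadget_row_def nu_empty tau_empty)
next
  case (Suc m)
  let ?R = "{p. fst p < 40 * real m}"
  have separated: "\<Union>(gadget (40 * real m)) \<inter> ?R = {}"
    using Union_gadget_subset[of "40 * real m"] by auto
  have "finite (gadget (40 * real m))"
    by (simp add: gadget_def)
  then show ?case
    using Suc.IH nu_Un_separated[OF finite_gadget_row _ empty_notin_gadget_row Union_gadget_row_subset separated]
      tau_Un_separated[OF finite_gadget_row _ empty_notin_gadget_row empty_notin_gadget Union_gadget_row_subset separated]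
    by (simp add: gadget_row_Suc nu_gadget tau_gadget)
qed

definition two_line_family :: "nat \<Rightarrow> (real \<times> real) set set" where
  "two_line_family n =
     gadget_row (n div 2) \<union> (if even n then {} else {{(40 * real (n div 2), 0)}})"

lemma nu_tau_two_line_family:
  "nu (two_line_family n) = n \<and> tau (two_line_family n) = 3 * (n div 2) + n mod 2"
proof (cases "even n")
  case True
  then show ?thesis
    using nu_tau_gadget_row[of "n div 2"] by (simp add: two_line_family_def)
next
  case False
  let ?m = "n div 2"
  have separated: "\<Union>{{(40 * real ?m, 0::real)}} \<inter> {p. fst p < 40 * real ?m} = {}"
    by simp
  have "nu (two_line_family n) = 2 * ?m + 1" "tau (two_line_family n) = 3 * ?m + 1"
    using False nu_tau_gadget_row[of ?m]
      nu_Un_separated[OF finite_gadget_row _ empty_notin_gadget_row Union_gadget_row_subset separated]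
      tau_Un_separated[OF finite_gadget_row _ empty_notin_gadget_row _ Union_gadget_row_subset separated]
    by (simp_all add: two_line_family_def nu_singleton tau_singleton)
  then show ?thesis
    using False by presburger
qed

lemma two_line_family_boxes: "S \<in> two_line_family n \<Longrightarrow> is_box S"
  unfolding two_line_family_def gadget_row_def
  using gadget_boxes is_box_Times[of "40 * real (n div 2)" "40 * real (n div 2)" 0 0] by (auto split: if_splits)

lemma two_line_family_meets_hlines:
  "S \<in> two_line_family n \<Longrightarrow> S \<inter> hline 0 \<noteq> {} \<or> S \<inter> hline 10 \<noteq> {}"
  unfolding two_line_family_def gadget_row_def
  using gadget_meets_hlines by (auto simp: hline_def split: if_splits)

lemma nat_floor_three_halves: "nat \<lfloor>3 * real n / 2\<rfloor> = 3 * (n div 2) + n mod 2"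
proof -
  have "real n = 2 * real (n div 2) + real (n mod 2)"
    using div_mult_mod_eq[of n 2] by (metis mult.commute of_nat_add of_nat_mult of_nat_numeral)
  then have "3 * real n / 2 = real (3 * (n div 2) + n mod 2) + real (n mod 2) / 2"
    by simp
  moreover have "real (n mod 2) / 2 < 1"
    by simp
  ultimately have "\<lfloor>3 * real n / 2\<rfloor> = int (3 * (n div 2) + n mod 2)"
    by (simp add: floor_eq_iff)
  then show ?thesis
    by simp
qed

theorem mainTheorem3:
  fixes n :: nat
  assumes "n \<ge> 1"
  shows "\<exists>B c1 c2. finite B \<and> (\<forall>S\<in>B. is_box S) \<and> c1 \<noteq> c2 \<and>
           (\<forall>S\<in>B. S \<inter> hline c1 \<noteq> {} \<or> S \<inter> hline c2 \<noteq> {}) \<and>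
           nu B = n \<and> tau B = nat \<lfloor>3 * real n / 2\<rfloor>"
proof (intro exI conjI)
  show "finite (two_line_family n)"
    by (simp add: two_line_family_def finite_gadget_row)
  show "\<forall>S\<in>two_line_family n. is_box S"
    using two_line_family_boxes by blast
  show "(0::real) \<noteq> 10"
    by simp
  show "\<forall>S\<in>two_line_family n. S \<inter> hline 0 \<noteq> {} \<or> S \<inter> hline 10 \<noteq> {}"
    using two_line_family_meets_hlines by blast
  show "nu (two_line_family n) = n" "tau (two_line_family n) = nat \<lfloor>3 * real n / 2\<rfloor>"
    using nu_tau_two_line_family[of n] by (simp_all add: nat_floor_three_halves)
qed

end
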